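(* Let $\mathcal{C}\subset\mathbb{R}^n$ be a nonempty compact convex set with Euclidean diameter $D$, let $f$ be continuously differentiable with $\nabla f$ $L$-Lipschitz on $\mathcal{C}$, and assume $f$ is $\rho$-quasar-convex on $\mathcal{C}$ with $\rho\in(0,1]$ (there is $x^\star\in\arg\min_{\mathcal{C}}f$ with $f^\star-f(y)\ge\frac1\rho\langle\nabla f(y),x^\star-y\rangle$ for all $y\in\mathcal{C}$, $f^\star=\min_{\mathcal{C}}f$). Let $\{x^t\}_{t=0}^T$ be generated by the Boosted Stochastic Frank–Wolfe algorithm described in the context. Then for every $t$, $$F_{t+1}\le(1-\rho\eta_t)F_t+2\eta_t\|\Delta^t\|D+\frac L2\eta_t^2D^2,$$ where $F_t=f(x^t)-f^\star$ and $\Delta^t=m^t-\nabla f(x^t)$.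
   Context: Euclidean norms; $D=\max_{x,y\in\mathcal{C}}\|x-y\|$. $\mathrm{lmo}(v)$ denotes a (fixed selection of a) point of $\arg\min_{s\in\mathcal{C}}\langle s,v\rangle$. $\mathrm{align}(d,\hat d)=\frac{\langle d,\hat d\rangle}{\|d\|\|\hat d\|}$ if $\hat d\ne0$, $-1$ if $\hat d=0$. Algorithm: inputs $K\ge1$, $\delta\in(0,1]$, step decays $\eta_t>0$, a vector $m^{\rm init}$; $x^0=\mathrm{lmo}(m^{\rm init})$. At iteration $t$, a (random) estimator $m^t$ of $\nabla f(x^t)$ is formed. Boosting: $\psi^0=0$, $\Lambda_t=0$, $k=0$; while $k\le K-1$: $r^k=-m^t-\psi^k$, $v^k=\mathrm{lmo}(-r^k)$; if $k=0$, $s^t=v^0$; if $\psi^k\ne0$, $u^k$ is whichever of $v^k-x^t$, $-\psi^k/\|\psi^k\|$ has the larger inner product with $r^k$, else $u^k=v^k-x^t$; if $u^k=0$ stop; $\lambda_k=\langle r^k,u^k\rangle/\|u^k\|^2$, $\phi^k=\psi^k+\lambda_ku^k$; if $\mathrm{align}(-m^t,\phi^k)-\mathrm{align}(-m^t,\psi^k)\ge\delta$ then $\psi^{k+1}=\phi^k$, $\Lambda_t\leftarrow\Lambda_t+\lambda_k$ if $u^k=v^k-x^t$ and $\Lambda_t\leftarrow\Lambda_t(1-\lambda_k/\|\psi^k\|)$ otherwise, $k\leftarrow k+1$; else stop. With $\psi$ the last accepted candidate, $\tilde d^t=\psi/\Lambda_t$ if $\Lambda_t\ne0$, else $0$. $\gamma_t=\min\{\eta_t\|s^t-x^t\|/\|\tilde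 d^t\|,1\}$ if $\tilde d^t\ne0$, else $1$. If $\gamma_t<1$: $x^{t+1}=x^t+\gamma_t\tilde d^t$; otherwise $x^{t+1}=x^t+\eta_t(s^t-x^t)$. *)

theory Defs
  imports "HOL-Analysis.Analysis"
begin

definition align :: "'a::real_inner \<Rightarrow> 'a \<Rightarrow> real" where
  "align d dh = (if dh = 0 then -1 else (d \<bullet> dh) / (norm d * norm dh))"

text \<open>Returns None if the loop stops.
  lmo is the (fixed selection of the) linear minimization oracle, xt the current iterate,
  mt the gradient estimator, delta the alignment threshold.\<close>
definition boost_iter ::
  "('a::real_inner \<Rightarrow> 'a) \<Rightarrow> real \<Rightarrow> 'a \<Rightarrow> 'a \<Rightarrow> 'a \<times> real \<Rightarrow> ('a \<times> real) option" where
  "boost_iter lmo delta xt mt st =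
    (let psi = fst st; Lam = snd st;
         r = - mt - psi;
         v = lmo (- r);
         u = (if psi \<noteq> 0
              then (if r \<bullet> (v - xt) \<ge> r \<bullet> (- (inverse (norm psi)) *\<^sub>R psi)
                    then v - xt else - (inverse (norm psi)) *\<^sub>R psi)
              else v - xt)
     in if u = 0 then None
        else (let lam = (r \<bullet> u) / (norm u)^2;
                  phi = psi + lam *\<^sub>R u
              in if align (- mt) phi - align (- mt) psi \<ge> delta
                 then Some (phi, if u = v - xt then Lam + lam else Lam * (1 - lam / norm psi))
                 else None))"

fun boost_loop ::
  "('a::real_inner \<Rightarrow> 'a) \<Rightarrow> real \<Rightarrow> 'a \<Rightarrow> 'a \<Rightarrow> nat \<Rightarrow> 'a \<times> real \<Rightarrow> 'a \<times> real" where
  "boost_loop lmo delta xt mt 0 st = st"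
| "boost_loop lmo delta xt mt (Suc n) st =
     (case boost_iter lmo delta xt mt st of
        None \<Rightarrow> st
      | Some st' \<Rightarrow> boost_loop lmo delta xt mt n st')"

text \<open>One outer step of Boosted Stochastic Frank--Wolfe: from x^t, estimator m^t and
  step decay eta_t, compute x^{t+1}.  s^t = v^0 = lmo(m^t) (since psi^0 = 0).\<close>
definition bsfw_step ::
  "('a::real_inner \<Rightarrow> 'a) \<Rightarrow> nat \<Rightarrow> real \<Rightarrow> real \<Rightarrow> 'a \<Rightarrow> 'a \<Rightarrow> 'a" where
  "bsfw_step lmo K delta eta xt mt =
    (let s = lmo mt;
         st = boost_loop lmo delta xt mt K (0, 0);
         psi = fst st; Lam = snd st;
         dt = (if Lam \<noteq> 0 then (inverse Lam) *\<^sub>R psi else 0);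
         gam = (if dt \<noteq> 0 then min (eta * norm (s - xt) / norm dt) 1 else 1)
     in if gam < 1 then xt + gam *\<^sub>R dt else xt + eta *\<^sub>R (s - xt))"

end

(*
  Boosting only replaces the Frank-Wolfe direction s - x (s = lmo m) by a direction d such
  that x + d is still a point of C and d is at least as well aligned with -m as s - x; the
  step length is then capped at that of the Frank-Wolfe step eta (s - x). So the new iterate
  is feasible, no farther from x than the Frank-Wolfe step, and decreases the linear model
  m at least as much. The usual one-step analysis then applies verbatim: the quadratic upper
  bound for an L-smooth f, optimality of s against the minimiser, quasar-convexity at x, and
  two Cauchy-Schwarz estimates for the gradient error m - grad x, each costing
  eta * norm (m - grad x) * diameter C.
*)
theory Submission
  imports Defs
begin

lemma align_zero [simp]: "align d 0 = -1"
  by (simp add: align_def)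

lemma align_scaleR_pos:
  fixes d v :: "'a::real_inner"
  assumes "0 < c"
  shows "align d (c *\<^sub>R v) = align d v"
  using assms by (auto simp: align_def)

lemma align_scaleR_neg:
  fixes d v :: "'a::real_inner"
  assumes "c < 0" "v \<noteq> 0"
  shows "align d (c *\<^sub>R v) = - align d v"
  using assms by (auto simp: align_def abs_of_neg)

lemma align_le_iff:
  fixes d u v :: "'a::real_inner"
  assumes "d \<noteq> 0" "u \<noteq> 0" "v \<noteq> 0"
  shows "align d u \<le> align d v \<longleftrightarrow> (d \<bullet> u) / norm u \<le> (d \<bullet> v) / norm v"
proof -
  have "align d w = (d \<bullet> w) / norm w / norm d" if "w \<noteq> 0" for w
    using that by (simp add: align_def mult.commute)
  with assms show ?thesis
    by (simp del: divide_divide_eq_left add: divide_le_cancel)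
qed

lemma align_ge_neg_one: "-1 \<le> align d (v::'a::real_inner)"
proof (cases "d = 0 \<or> v = 0")
  case False
  then have "- (norm d * norm v) \<le> d \<bullet> v"
    using Cauchy_Schwarz_ineq2[of d v] by linarith
  with False show ?thesis
    by (simp add: align_def le_divide_eq)
qed (auto simp: align_def)

lemma align_increase_imp_scale_pos:
  fixes d v :: "'a::real_inner"
  assumes "align d v < align d (c *\<^sub>R v)" "0 \<le> align d v"
  shows "0 < c"
proof (rule ccontr)
  assume "\<not> 0 < c"
  then consider "c = 0" | "c < 0" "v \<noteq> 0"
    using assms(1) by fastforce
  then show False
    using assms align_scaleR_neg[of c v d] by cases auto
qed

lemma inner_le_inner_add_norm_mult:
  fixes a b w :: "'a::real_inner"
  shows "a \<bullet> w \<le> b \<bullet> w + norm (a - b) * norm w"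
  using norm_cauchy_schwarz[of "a - b" w] by (simp add: inner_diff_left)

lemma convex_add_scaleR_diff_mem:
  assumes "convex C" "x \<in> C" "z \<in> C" "0 \<le> t" "t \<le> 1"
  shows "x + t *\<^sub>R (z - x) \<in> C"
proof -
  have "x + t *\<^sub>R (z - x) = (1 - t) *\<^sub>R x + t *\<^sub>R z"
    by (simp add: algebra_simps)
  then show ?thesis
    using convexD_alt[OF assms] by simp
qed

lemma add_scaleR_inverse_eq_convex_comb:
  fixes x psi v :: "'a::real_vector"
  assumes "0 < Lam" "0 \<le> lam"
  shows "x + inverse (Lam + lam) *\<^sub>R (psi + lam *\<^sub>R (v - x))
          = (Lam / (Lam + lam)) *\<^sub>R (x + inverse Lam *\<^sub>R psi) + (lam / (Lam + lam)) *\<^sub>R v"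
proof -
  have "(Lam / (Lam + lam)) *\<^sub>R (x + inverse Lam *\<^sub>R psi) + (lam / (Lam + lam)) *\<^sub>R v
      = inverse (Lam + lam) *\<^sub>R (Lam *\<^sub>R x + psi + lam *\<^sub>R v)"
    using assms by (simp add: algebra_simps divide_inverse)
  also have "Lam *\<^sub>R x + psi + lam *\<^sub>R v = (Lam + lam) *\<^sub>R x + (psi + lam *\<^sub>R (v - x))"
    by (simp add: algebra_simps)
  also have "inverse (Lam + lam) *\<^sub>R \<dots> = x + inverse (Lam + lam) *\<^sub>R (psi + lam *\<^sub>R (v - x))"
    using assms by (simp only: scaleR_add_right scaleR_scaleR) simp
  finally show ?thesis ..
qed

definition is_lmo :: "'a::real_inner set \<Rightarrow> ('a \<Rightarrow> 'a) \<Rightarrow> bool" where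
  "is_lmo C lmo \<longleftrightarrow> (\<forall>v. lmo v \<in> C \<and> (\<forall>s\<in>C. lmo v \<bullet> v \<le> s \<bullet> v))"

lemma is_lmo_mem: "is_lmo C lmo \<Longrightarrow> lmo v \<in> C"
  by (simp add: is_lmo_def)

lemma is_lmo_inner_le:
  "is_lmo C lmo \<Longrightarrow> s \<in> C \<Longrightarrow> v \<bullet> lmo v \<le> v \<bullet> s"
  unfolding is_lmo_def by (metis inner_commute)

lemma is_lmo_align_nonneg:
  assumes "is_lmo C lmo" "x \<in> C" "lmo m \<noteq> x"
  shows "0 \<le> align (- m) (lmo m - x)"
proof -
  have "m \<bullet> (lmo m - x) \<le> 0"
    using is_lmo_inner_le[OF assms(1,2), of m] by (simp add: inner_diff_right)
  with assms(3) show ?thesis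
    by (auto simp: align_def intro: divide_nonpos_nonneg)
qed

(*
  x + psi / Lam stays in C because a vertex step mixes a new LMO output convexly into it and a
  shrink step rescales psi and Lam by the same factor, which acceptance forces to be positive.
*)
fun boost_invariant :: "'a::real_inner set \<Rightarrow> 'a \<Rightarrow> 'a \<Rightarrow> 'a \<Rightarrow> 'a \<times> real \<Rightarrow> bool" where
  "boost_invariant C x m s (psi, Lam) \<longleftrightarrow> (psi = 0 \<and> Lam = 0) \<or>
     (0 < Lam \<and> psi \<noteq> 0 \<and> s \<noteq> x \<and> x + inverse Lam *\<^sub>R psi \<in> C
      \<and> align (- m) (s - x) \<le> align (- m) psi)"

lemma boost_iter_Some_align_increase:
  assumes "boost_iter lmo \<delta> x m (psi, Lam) = Some (phi, Lam')"
  shows "\<delta> \<le> align (- m) phi - align (- m) psi"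
  using assms by (auto simp: boost_iter_def Let_def split: if_splits)

lemma boost_iter_SomeE:
  assumes it: "boost_iter lmo \<delta> x m (psi, Lam) = Some (phi, Lam')"
    and lmo: "is_lmo C lmo" and x: "x \<in> C"
  obtains (vertex) lam
      where "0 \<le> lam" "phi = psi + lam *\<^sub>R (lmo (m + psi) - x)" "Lam' = Lam + lam"
  | (shrink) c where "psi \<noteq> 0" "phi = c *\<^sub>R psi" "Lam' = Lam * c"
proof -
  define r where "r = - m - psi"
  define v where "v = lmo (m + psi)"
  define u where "u = (if psi \<noteq> 0
                      then (if r \<bullet> (v - x) \<ge> r \<bullet> (- (inverse (norm psi)) *\<^sub>R psi)
                            then v - x else - (inverse (norm psi)) *\<^sub>R psi)
                      else v - x)"
  define lam where "lam = (r \<bullet> u) / (norm u)\<^sup>2"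
  have v: "lmo (- r) = v"
    by (simp add: r_def v_def add.commute)
  have "boost_iter lmo \<delta> x m (psi, Lam) =
      (if u = 0 then None
       else if \<delta> \<le> align (- m) (psi + lam *\<^sub>R u) - align (- m) psi
       then Some (psi + lam *\<^sub>R u, if u = v - x then Lam + lam else Lam * (1 - lam / norm psi))
       else None)"
    unfolding boost_iter_def Let_def fst_conv snd_conv r_def[symmetric] v
      u_def[symmetric] lam_def[symmetric] by (rule refl)
  with it have phi: "phi = psi + lam *\<^sub>R u"
    and Lam': "Lam' = (if u = v - x then Lam + lam else Lam * (1 - lam / norm psi))"
    by (auto split: if_splits)
  show thesis
  proof (cases "u = v - x")
    case True
    have "0 \<le> r \<bullet> (v - x)"
      using is_lmo_inner_le[OF lmo x, of "- r"] by (simp add: v inner_diff_right)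
    then have "0 \<le> lam"
      using True by (simp add: lam_def)
    then show thesis
      using vertex True phi Lam' v_def by simp
  next
    case False
    then have "psi \<noteq> 0" "u = - (inverse (norm psi)) *\<^sub>R psi"
      by (auto simp: u_def split: if_splits)
    then have "phi = (1 - lam / norm psi) *\<^sub>R psi"
      by (simp add: phi algebra_simps divide_inverse)
    then show thesis
      using shrink \<open>psi \<noteq> 0\<close> False Lam' by simp
  qed
qed

lemma boost_iter_preserves_invariant:
  assumes lmo: "is_lmo C lmo" and C: "convex C" and x: "x \<in> C" and "0 < \<delta>"
    and inv: "boost_invariant C x m (lmo m) (psi, Lam)"
    and it: "boost_iter lmo \<delta> x m (psi, Lam) = Some (phi, Lam')"
  shows "boost_invariant C x m (lmo m) (phi, Lam')"
proof -
  define s where "s = lmo m"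
  have better: "align (- m) psi < align (- m) phi"
    using boost_iter_Some_align_increase[OF it] \<open>0 < \<delta>\<close> by simp
  then have "phi \<noteq> 0"
    using align_ge_neg_one[of "- m" psi] by auto
  have inv_psi: "0 < Lam" "x + inverse Lam *\<^sub>R psi \<in> C" "s \<noteq> x"
      and aligned: "align (- m) (s - x) \<le> align (- m) psi" if "psi \<noteq> 0"
    using inv that by (auto simp: s_def)
  from it lmo x show ?thesis
  proof (cases rule: boost_iter_SomeE)
    case (vertex lam)
    show ?thesis
    proof (cases "psi = 0")
      case True
      with inv have "Lam = 0"
        by simp
      have phi: "phi = lam *\<^sub>R (s - x)"
        using vertex True by (simp add: s_def)
      then have "0 < lam" "s \<noteq> x"
        using \<open>phi \<noteq> 0\<close> \<open>0 \<le> lam\<close> by auto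
      then show ?thesis
        using \<open>phi \<noteq> 0\<close> is_lmo_mem[OF lmo] align_scaleR_pos[of lam "- m" "s - x"]
        by (simp add: vertex(3) \<open>Lam = 0\<close> phi s_def)
    next
      case False
      note inv_psi = inv_psi[OF False] aligned[OF False]
      have "x + inverse Lam' *\<^sub>R phi
          = (Lam / Lam') *\<^sub>R (x + inverse Lam *\<^sub>R psi) + (lam / Lam') *\<^sub>R lmo (m + psi)"
        using add_scaleR_inverse_eq_convex_comb[OF inv_psi(1) \<open>0 \<le> lam\<close>] by (simp add: vertex)
      also have "\<dots> \<in> C"
        using mem_convex_alt[OF C inv_psi(2) is_lmo_mem[OF lmo]] inv_psi(1) \<open>0 \<le> lam\<close>
        by (simp add: vertex(3))
      finally show ?thesis
        using inv_psi \<open>0 \<le> lam\<close> \<open>phi \<noteq> 0\<close> better by (simp add: vertex(3) s_def)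
    qed
  next
    case (shrink c)
    note inv_psi = inv_psi[OF shrink(1)] aligned[OF shrink(1)]
    have "0 \<le> align (- m) psi"
      using is_lmo_align_nonneg[OF lmo x, of m] inv_psi by (simp add: s_def)
    then have "0 < c"
      using align_increase_imp_scale_pos better shrink by blast
    then have "x + inverse Lam' *\<^sub>R phi = x + inverse Lam *\<^sub>R psi"
      "align (- m) phi = align (- m) psi"
      using inv_psi(1) align_scaleR_pos by (simp_all add: shrink)
    then show ?thesis
      using inv_psi \<open>0 < c\<close> \<open>phi \<noteq> 0\<close> by (simp add: shrink(3) s_def)
  qed
qed

lemma boost_loop_preserves_invariant:
  assumes "is_lmo C lmo" "convex C" "x \<in> C" "0 < \<delta>"
  shows "boost_invariant C x m (lmo m) st \<Longrightarrow>
           boost_invariant C x m (lmo m) (boost_loop lmo \<delta> x m n st)"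
proof (induction n arbitrary: st)
  case (Suc n)
  show ?case
  proof (cases "boost_iter lmo \<delta> x m st")
    case (Some st')
    then have "boost_invariant C x m (lmo m) st'"
      using boost_iter_preserves_invariant[OF assms] Suc.prems by (metis prod.collapse)
    with Some show ?thesis
      by (simp add: Suc.IH)
  qed (use Suc.prems in simp)
qed simp

(* The only properties of the new iterate y that the convergence bound uses. *)
definition fw_dominated :: "'a::real_inner set \<Rightarrow> 'a \<Rightarrow> 'a \<Rightarrow> 'a \<Rightarrow> real \<Rightarrow> 'a \<Rightarrow> bool" where
  "fw_dominated C m x s eta y \<longleftrightarrow>
     y \<in> C \<and> norm (y - x) \<le> eta * norm (s - x) \<and> m \<bullet> (y - x) \<le> eta * (m \<bullet> (s - x))"

lemma fw_step_fw_dominated: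
  assumes "convex C" "x \<in> C" "s \<in> C" "0 \<le> eta" "eta \<le> 1"
  shows "fw_dominated C m x s eta (x + eta *\<^sub>R (s - x))"
  using convex_add_scaleR_diff_mem[OF assms] assms(4) by (simp add: fw_dominated_def)

lemma bsfw_step_fw_dominated:
  assumes lmo: "is_lmo C lmo" and C: "convex C" and x: "x \<in> C" and "0 < \<delta>"
    and eta: "0 \<le> eta" "eta \<le> 1"
  shows "fw_dominated C m x (lmo m) eta (bsfw_step lmo K \<delta> eta x m)"
proof -
  define s where "s = lmo m"
  obtain psi Lam where st: "boost_loop lmo \<delta> x m K (0, 0) = (psi, Lam)"
    by fastforce
  define dt where "dt = (if Lam \<noteq> 0 then inverse Lam *\<^sub>R psi else 0)"
  define gam where "gam = (if dt \<noteq> 0 then min (eta * norm (s - x) / norm dt) 1 else 1)"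
  have step: "bsfw_step lmo K \<delta> eta x m =
      (if gam < 1 then x + gam *\<^sub>R dt else x + eta *\<^sub>R (s - x))"
    unfolding bsfw_step_def Let_def s_def[symmetric] st fst_conv snd_conv
      dt_def[symmetric] gam_def[symmetric] by (rule refl)
  show ?thesis
  proof (cases "gam < 1")
    case False
    then show ?thesis
      using fw_step_fw_dominated[OF C x is_lmo_mem[OF lmo] eta] by (simp add: step s_def)
  next
    case True
    then have "dt \<noteq> 0" and gam: "gam = eta * norm (s - x) / norm dt"
      by (auto simp: gam_def split: if_splits)
    then have "Lam \<noteq> 0" "dt = inverse Lam *\<^sub>R psi"
      by (auto simp: dt_def split: if_splits)
    moreover have "boost_invariant C x m s (psi, Lam)"
      using boost_loop_preserves_invariant[OF lmo C x \<open>0 < \<delta>\<close>, of m "(0, 0)" K] st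
      by (simp add: s_def)
    ultimately have "s \<noteq> x" "x + dt \<in> C" and aligned: "align (- m) (s - x) \<le> align (- m) dt"
      using align_scaleR_pos[of "inverse Lam" "- m" psi] by auto
    have "0 \<le> gam"
      using gam eta by simp
    have "x + gam *\<^sub>R dt \<in> C"
      using convex_add_scaleR_diff_mem[OF C x \<open>x + dt \<in> C\<close> \<open>0 \<le> gam\<close>] True by simp
    moreover have "norm (gam *\<^sub>R dt) = eta * norm (s - x)"
      using gam \<open>dt \<noteq> 0\<close> eta by simp
    moreover have "m \<bullet> (gam *\<^sub>R dt) \<le> eta * (m \<bullet> (s - x))"
    proof (cases "m = 0")
      case False
      then have "(m \<bullet> dt) / norm dt \<le> (m \<bullet> (s - x)) / norm (s - x)"
        using aligned align_le_iff[of "- m" "s - x" dt] \<open>dt \<noteq> 0\<close> \<open>s \<noteq> x\<close> by simp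
      then have "eta * norm (s - x) * ((m \<bullet> dt) / norm dt)
          \<le> eta * norm (s - x) * ((m \<bullet> (s - x)) / norm (s - x))"
        using eta by (intro mult_left_mono) auto
      then show ?thesis
        using gam \<open>s \<noteq> x\<close> by simp
    qed simp
    ultimately show ?thesis
      using True by (simp add: step fw_dominated_def s_def)
  qed
qed

lemma lipschitz_gradient_quadratic_upper_bound:
  fixes f :: "'a::real_inner \<Rightarrow> real"
  assumes C: "convex C" and x: "x \<in> C" and y: "y \<in> C"
    and f_deriv: "\<And>z. z \<in> C \<Longrightarrow> (f has_derivative (\<lambda>h. grad z \<bullet> h)) (at z)"
    and grad_lip: "\<forall>y\<in>C. \<forall>z\<in>C. norm (grad y - grad z) \<le> L * norm (y - z)"
  shows "f y \<le> f x + grad x \<bullet> (y - x) + L / 2 * (norm (y - x))\<^sup>2"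
proof -
  define d where "d = y - x"
  define \<phi> where "\<phi> t = f (x + t *\<^sub>R d) - t * (grad x \<bullet> d) - L / 2 * t\<^sup>2 * (norm d)\<^sup>2" for t
  have "\<phi> 1 \<le> \<phi> 0"
  proof (rule DERIV_nonpos_imp_nonincreasing[of 0 1])
    fix t :: real
    assume t: "0 \<le> t" "t \<le> 1"
    define z where "z = x + t *\<^sub>R d"
    have z: "z \<in> C"
      using convex_add_scaleR_diff_mem[OF C x y t] by (simp add: z_def d_def)
    have "((\<lambda>t. x + t *\<^sub>R d) has_derivative (\<lambda>h. h *\<^sub>R d)) (at t)"
      by (auto intro!: derivative_eq_intros)
    from has_derivative_compose[OF this f_deriv[OF z, unfolded z_def]]
    have "((\<lambda>t. f (x + t *\<^sub>R d)) has_derivative (\<lambda>h. grad z \<bullet> (h *\<^sub>R d))) (at t)"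
      unfolding z_def .
    moreover have "(\<lambda>h. grad z \<bullet> (h *\<^sub>R d)) = (*) (grad z \<bullet> d)"
      by (auto simp: mult.commute)
    ultimately have "((\<lambda>t. f (x + t *\<^sub>R d)) has_real_derivative grad z \<bullet> d) (at t)"
      by (simp add: has_field_derivative_def)
    then have deriv:
        "(\<phi> has_real_derivative grad z \<bullet> d - grad x \<bullet> d - L / 2 * (2 * t) * (norm d)\<^sup>2) (at t)"
      unfolding \<phi>_def by (auto intro!: derivative_eq_intros)
    have "grad z \<bullet> d - grad x \<bullet> d \<le> norm (grad z - grad x) * norm d"
      using inner_le_inner_add_norm_mult[of "grad z" d "grad x"] by simp
    also have "\<dots> \<le> L * norm (z - x) * norm d"
      using grad_lip z x by (intro mult_right_mono) auto
    also have "\<dots> = L * t * (norm d)\<^sup>2"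
      using t by (simp add: z_def power2_eq_square)
    finally show "\<exists>y. (\<phi> has_real_derivative y) (at t) \<and> y \<le> 0"
      using deriv by auto
  qed simp
  then show ?thesis
    by (simp add: \<phi>_def d_def)
qed

lemma lipschitz_quadratic_term_le:
  assumes grad_lip: "\<forall>y\<in>C. \<forall>z\<in>C. norm (grad y - grad z) \<le> L * norm (y - z)"
    and x: "x \<in> C" and y: "y \<in> C" and short: "norm (y - x) \<le> eta * diameter C"
  shows "L / 2 * (norm (y - x))\<^sup>2 \<le> L / 2 * eta\<^sup>2 * (diameter C)\<^sup>2"
proof (cases "0 \<le> L")
  case True
  have "(norm (y - x))\<^sup>2 \<le> (eta * diameter C)\<^sup>2"
    using short by (intro power_mono) auto
  with True show ?thesis
    by (simp add: mult_left_mono power_mult_distrib mult.assoc)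
next
  case False
  have "a = x" if "a \<in> C" for a
  proof -
    have "0 \<le> L * norm (a - x)"
      using grad_lip that x norm_ge_zero order_trans by blast
    with False show ?thesis
      by (simp add: zero_le_mult_iff)
  qed
  then have "C = {x}"
    using x by blast
  with y show ?thesis
    by simp
qed

lemma fw_dominated_step_recurrence:
  fixes f :: "'a::real_inner \<Rightarrow> real"
  assumes C: "convex C" "bounded C"
    and f_deriv: "\<And>z. z \<in> C \<Longrightarrow> (f has_derivative (\<lambda>h. grad z \<bullet> h)) (at z)"
    and grad_lip: "\<forall>y\<in>C. \<forall>z\<in>C. norm (grad y - grad z) \<le> L * norm (y - z)"
    and x: "x \<in> C" and xs: "xs \<in> C" and s: "s \<in> C" "m \<bullet> s \<le> m \<bullet> xs"
    and \<rho>: "0 < \<rho>" and quasar: "(1 / \<rho>) * (grad x \<bullet> (xs - x)) \<le> f xs - f x"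
    and eta: "0 \<le> eta" and y: "fw_dominated C m x s eta y"
  shows "f y - f xs \<le> (1 - \<rho> * eta) * (f x - f xs)
           + 2 * eta * norm (m - grad x) * diameter C + L / 2 * eta\<^sup>2 * (diameter C)\<^sup>2"
proof -
  define D where "D = diameter C"
  define \<Delta> where "\<Delta> = norm (m - grad x)"
  define F where "F = f x - f xs"
  have dist: "norm (a - b) \<le> D" if "a \<in> C" "b \<in> C" for a b
    using diameter_bounded_bound[OF C(2) that] by (simp add: D_def dist_norm)
  have yC: "y \<in> C" and "norm (y - x) \<le> eta * norm (s - x)"
    and linear_decrease: "m \<bullet> (y - x) \<le> eta * (m \<bullet> (s - x))"
    using y by (auto simp: fw_dominated_def)
  then have short: "norm (y - x) \<le> eta * D"
    using dist[OF s(1) x] eta by (meson mult_left_mono order_trans)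
  have quadratic: "L / 2 * (norm (y - x))\<^sup>2 \<le> L / 2 * eta\<^sup>2 * D\<^sup>2"
    using lipschitz_quadratic_term_le[OF grad_lip x yC] short by (simp add: D_def)
  note linear_decrease
  also have "eta * (m \<bullet> (s - x)) \<le> eta * (m \<bullet> (xs - x))"
    using s(2) eta by (intro mult_left_mono) (simp_all add: inner_diff_right)
  also have "\<dots> \<le> eta * (grad x \<bullet> (xs - x) + \<Delta> * D)"
  proof -
    have "\<Delta> * norm (xs - x) \<le> \<Delta> * D"
      using dist[OF xs x] by (simp add: \<Delta>_def mult_left_mono)
    then have "m \<bullet> (xs - x) \<le> grad x \<bullet> (xs - x) + \<Delta> * D"
      using inner_le_inner_add_norm_mult[of m "xs - x" "grad x"] by (simp add: \<Delta>_def)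
    then show ?thesis
      using eta by (intro mult_left_mono) auto
  qed
  also have "\<dots> \<le> eta * (- \<rho> * F + \<Delta> * D)"
  proof -
    have "grad x \<bullet> (xs - x) \<le> - \<rho> * F"
      using quasar \<rho> by (simp add: F_def field_simps)
    then show ?thesis
      using eta by (intro mult_left_mono) auto
  qed
  finally have model: "m \<bullet> (y - x) \<le> eta * (- \<rho> * F + \<Delta> * D)" .
  have "f y - f xs \<le> F + grad x \<bullet> (y - x) + L / 2 * (norm (y - x))\<^sup>2"
    using lipschitz_gradient_quadratic_upper_bound[OF C(1) x yC f_deriv grad_lip] by (simp add: F_def)
  also have "grad x \<bullet> (y - x) \<le> m \<bullet> (y - x) + \<Delta> * (eta * D)"
  proof -
    have "\<Delta> * norm (y - x) \<le> \<Delta> * (eta * D)"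
      using short by (simp add: \<Delta>_def mult_left_mono)
    then show ?thesis
      using inner_le_inner_add_norm_mult[of "grad x" "y - x" m] by (simp add: \<Delta>_def norm_minus_commute)
  qed
  finally show ?thesis
    using model quadratic by (simp add: D_def \<Delta>_def F_def algebra_simps)
qed

theorem theorem13:
  fixes C :: "'a::euclidean_space set"
    and f :: "'a \<Rightarrow> real" and grad :: "'a \<Rightarrow> 'a"
    and L \<rho> \<delta> :: real and K :: nat and \<eta> :: "nat \<Rightarrow> real"
    and lmo :: "'a \<Rightarrow> 'a" and minit :: 'a and m x :: "nat \<Rightarrow> 'a"
  assumes C_ne: "C \<noteq> {}" and C_compact: "compact C" and C_convex: "convex C"
    and f_deriv: "\<forall>y. (f has_derivative (\<lambda>h. grad y \<bullet> h)) (at y)"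
    and grad_cont: "continuous_on UNIV grad"
    and grad_lip: "\<forall>y\<in>C. \<forall>z\<in>C. norm (grad y - grad z) \<le> L * norm (y - z)"
    and rho: "0 < \<rho>" "\<rho> \<le> 1"
    and quasar: "\<exists>xs\<in>C. (\<forall>y\<in>C. f xs \<le> f y) \<and>
                   (\<forall>y\<in>C. (INF z\<in>C. f z) - f y \<ge> (1 / \<rho>) * (grad y \<bullet> (xs - y)))"
    and lmo: "\<forall>v. lmo v \<in> C \<and> (\<forall>s\<in>C. lmo v \<bullet> v \<le> s \<bullet> v)"
    and K: "K \<ge> 1" and delta: "0 < \<delta>" "\<delta> \<le> 1"
    and eta: "\<forall>t. 0 < \<eta> t \<and> \<eta> t \<le> 1"
    and x0: "x 0 = lmo minit"
    and xstep: "\<forall>t. x (Suc t) = bsfw_step lmo K \<delta> (\<eta> t) (x t) (m t)"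
  shows "\<forall>t. f (x (Suc t)) - (INF z\<in>C. f z)
            \<le> (1 - \<rho> * \<eta> t) * (f (x t) - (INF z\<in>C. f z))
              + 2 * \<eta> t * norm (m t - grad (x t)) * diameter C
              + L / 2 * (\<eta> t)^2 * (diameter C)^2"
proof
  fix t
  obtain xs where xs: "xs \<in> C" "\<forall>y\<in>C. f xs \<le> f y"
    and quasar_xs: "\<forall>y\<in>C. (INF z\<in>C. f z) - f y \<ge> (1 / \<rho>) * (grad y \<bullet> (xs - y))"
    using quasar by blast
  have fstar: "(INF z\<in>C. f z) = f xs"
    by (rule cInf_eq_minimum) (use xs in auto)
  have lmo_C: "is_lmo C lmo"
    using lmo by (simp add: is_lmo_def)
  have step: "fw_dominated C (m n) (x n) (lmo (m n)) (\<eta> n) (x (Suc n))" if "x n \<in> C" for n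
    using bsfw_step_fw_dominated[OF lmo_C C_convex that delta(1)] eta xstep by (simp add: less_imp_le)
  have iterates: "x n \<in> C" for n
  proof (induction n)
    case 0
    then show ?case
      using x0 is_lmo_mem[OF lmo_C] by simp
  next
    case (Suc n)
    then show ?case
      using step[OF Suc] by (simp add: fw_dominated_def)
  qed
  show "f (x (Suc t)) - (INF z\<in>C. f z)
          \<le> (1 - \<rho> * \<eta> t) * (f (x t) - (INF z\<in>C. f z))
            + 2 * \<eta> t * norm (m t - grad (x t)) * diameter C
            + L / 2 * (\<eta> t)^2 * (diameter C)^2"
    unfolding fstar
  proof (rule fw_dominated_step_recurrence[OF C_convex compact_imp_bounded[OF C_compact]])
    show "(1 / \<rho>) * (grad (x t) \<bullet> (xs - x t)) \<le> f xs - f (x t)"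
      using quasar_xs iterates fstar by auto
    show "m t \<bullet> lmo (m t) \<le> m t \<bullet> xs"
      using is_lmo_inner_le[OF lmo_C xs(1)] .
  qed (use f_deriv grad_lip rho iterates xs(1) is_lmo_mem[OF lmo_C] eta step
        in \<open>auto simp: less_imp_le\<close>)
qed

end
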